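(* Let $L$ be a component of a $T^*$-colored link diagram and $b$ a basepoint on an arc of $L$ whose label $\chi(b)$ satisfies $\chi(b)\in\{\pm i,\pm j,\pm k\}\cup\{\tfrac{1\pm i\pm j\pm k}{2}\}$. Then $q(L,b)$ is an integer power of $\chi(b)$.
   Context: $T^*=\{\pm1,\pm i,\pm j,\pm k,\tfrac{\pm1\pm i\pm j\pm k}{2}\}$ is the binary tetrahedral group (unit quaternions, all sign combinations). A $T^*$-colored link diagram is an oriented diagram of a tame link $\mathcal L\subset\mathbb{R}^3$ together with a homomorphism $\phi:\pi_1(\mathbb{R}^3\setminus\mathcal L)\to T^*$, in which each arc carries the label $\phi(m_a)$ of its Wirtinger meridian (with respect to a basepoint above the projection plane and the orientation of the arc). At each crossing $c$ where a component passes under an over-arc with label $g$, with incoming under-arc label $x$ and outgoing under-arc label $x'$, the Wirtinger relation $x'=g^{\varepsilon_c}xg^{-\varepsilon_c}$ holds, $\varepsilon_c\in\{\pm1\}$ determined by the sign of the crossing. For a component $L$ with basepoint $b$ on one of its arcs: traverse $L$ from $b$ along its orientation, let $c_1,\dots,c_m$ be the successive crossings where $L$ passes under an arc whose label is not $-1$, with over-arc labels $g_1,\dots,g_m$, and define $q(L,b)=g_m^{\varepsilon_{c_m}}\cdots g_1^{\varepsilon_{c_1}}\in T^*$. *)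

theory Defs
  imports Complex_Main
begin

datatype quat = Quat (Re: real) (Im1: real) (Im2: real) (Im3: real)

instantiation quat :: "{times, one, uminus, inverse}"
begin
definition one_quat :: quat where "one_quat = Quat 1 0 0 0"
definition times_quat :: "quat \<Rightarrow> quat \<Rightarrow> quat" where
  "times_quat p q =
     Quat (Re p * Re q - Im1 p * Im1 q - Im2 p * Im2 q - Im3 p * Im3 q)
          (Re p * Im1 q + Im1 p * Re q + Im2 p * Im3 q - Im3 p * Im2 q)
          (Re p * Im2 q - Im1 p * Im3 q + Im2 p * Re q + Im3 p * Im1 q)
          (Re p * Im3 q + Im1 p * Im2 q - Im2 p * Im1 q + Im3 p * Re q)"
definition uminus_quat :: "quat \<Rightarrow> quat" where
  "uminus_quat p = Quat (- Re p) (- Im1 p) (- Im2 p) (- Im3 p)"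
definition inverse_quat :: "quat \<Rightarrow> quat" where
  "inverse_quat p = (let n = (Re p)\<^sup>2 + (Im1 p)\<^sup>2 + (Im2 p)\<^sup>2 + (Im3 p)\<^sup>2 in
     Quat (Re p / n) (- Im1 p / n) (- Im2 p / n) (- Im3 p / n))"
definition divide_quat :: "quat \<Rightarrow> quat \<Rightarrow> quat" where
  "divide_quat p q = p * inverse q"
instance ..
end

instance quat :: monoid_mult
proof
  fix a b c :: quat
  show "a * b * c = a * (b * c)"
    by (cases a; cases b; cases c) (simp add: times_quat_def algebra_simps)
  show "1 * a = a" by (cases a) (simp add: times_quat_def one_quat_def)
  show "a * 1 = a" by (cases a) (simp add: times_quat_def one_quat_def)
qed

definition qi :: quat where "qi = Quat 0 1 0 0"
definition qj :: quat where "qj = Quat 0 0 1 0"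
definition qk :: quat where "qk = Quat 0 0 0 1"

definition Tstar :: "quat set" where
  "Tstar = {1, -1, qi, -qi, qj, -qj, qk, -qk} \<union>
     {Quat (a/2) (b/2) (c/2) (d/2) | a b c d. a \<in> {1,-1} \<and> b \<in> {1,-1} \<and> c \<in> {1,-1} \<and> d \<in> {1,-1}}"

definition base_labels :: "quat set" where
  "base_labels = {qi, -qi, qj, -qj, qk, -qk} \<union>
     {Quat (1/2) (b/2) (c/2) (d/2) | b c d. b \<in> {1,-1} \<and> c \<in> {1,-1} \<and> d \<in> {1,-1}}"

text \<open>A diagram is given by a finite set A of arcs and a finite set C of crossings.
  Each crossing c has an over-arc ov c, an incoming under-arc ui c, an outgoing
  under-arc uo c (w.r.t. the orientation of the under-strand) and a sign sg c \<in> {1,-1}.\<close>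
definition diagram :: "'a set \<Rightarrow> 'c set \<Rightarrow> ('c \<Rightarrow> 'a) \<Rightarrow> ('c \<Rightarrow> 'a) \<Rightarrow> ('c \<Rightarrow> 'a) \<Rightarrow> ('c \<Rightarrow> int) \<Rightarrow> bool" where
  "diagram A C ov ui uo sg \<longleftrightarrow> finite A \<and> finite C \<and>
     (\<forall>c\<in>C. ov c \<in> A \<and> ui c \<in> A \<and> uo c \<in> A \<and> sg c \<in> {1, -1}) \<and>
     (\<forall>c1\<in>C. \<forall>c2\<in>C. ui c1 = ui c2 \<longrightarrow> c1 = c2) \<and>
     (\<forall>c1\<in>C. \<forall>c2\<in>C. uo c1 = uo c2 \<longrightarrow> c1 = c2)"

text \<open>A T*-coloring: arc labels in T* satisfying the Wirtinger relation
  x' = g^e x g^(-e) at every crossing (equivalently a homomorphism from the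
  link group, by the Wirtinger presentation).\<close>
definition Tstar_coloring :: "'a set \<Rightarrow> 'c set \<Rightarrow> ('c \<Rightarrow> 'a) \<Rightarrow> ('c \<Rightarrow> 'a) \<Rightarrow> ('c \<Rightarrow> 'a) \<Rightarrow> ('c \<Rightarrow> int) \<Rightarrow> ('a \<Rightarrow> quat) \<Rightarrow> bool" where
  "Tstar_coloring A C ov ui uo sg chi \<longleftrightarrow>
     (\<forall>a\<in>A. chi a \<in> Tstar) \<and>
     (\<forall>c\<in>C. chi (uo c) = (chi (ov c) powi sg c) * chi (ui c) * (chi (ov c) powi (- sg c)))"

text \<open>cs is the complete list of successive under-crossings met when traversing the
  component of arc a0 once, starting from a basepoint on a0.\<close>
definition component_traversal :: "'c set \<Rightarrow> ('c \<Rightarrow> 'a) \<Rightarrow> ('c \<Rightarrow> 'a) \<Rightarrow> 'a \<Rightarrow> 'c list \<Rightarrow> bool" where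
  "component_traversal C ui uo a0 cs \<longleftrightarrow>
     set cs \<subseteq> C \<and> distinct cs \<and>
     (cs = [] \<longrightarrow> (\<forall>c\<in>C. ui c \<noteq> a0)) \<and>
     (cs \<noteq> [] \<longrightarrow> ui (hd cs) = a0 \<and> uo (last cs) = a0 \<and>
        (\<forall>t. Suc t < length cs \<longrightarrow> ui (cs ! Suc t) = uo (cs ! t)))"

text \<open>q(L,b) = g_m^(e_m) ... g_1^(e_1), skipping crossings whose over-arc label is -1.\<close>
fun qprod :: "('c \<Rightarrow> 'a) \<Rightarrow> ('c \<Rightarrow> int) \<Rightarrow> ('a \<Rightarrow> quat) \<Rightarrow> 'c list \<Rightarrow> quat" where
  "qprod ov sg chi [] = 1"
| "qprod ov sg chi (c # cs) =
     qprod ov sg chi cs * (if chi (ov c) = -1 then 1 else chi (ov c) powi sg c)"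

end

theory Submission
  imports Defs
begin

text \<open>Walking along the component, the Wirtinger relation at each crossing says that the
  factor \<open>g\<^sup>\<epsilon>\<close> conjugates the label of the incoming under-arc into the label of the outgoing
  one; crossings whose over-arc is labelled \<open>-1\<close> may be skipped because \<open>-1\<close> is central.
  As the walk returns to the arc of \<open>b\<close>, the product \<open>q(L,b)\<close> commutes with \<open>\<chi>(b)\<close>. Finally,
  the labels allowed at \<open>b\<close> have order 4 or 6 in \<open>T*\<close>, and for each of them the centralizer
  in \<open>T*\<close> is the cyclic group it generates; this is a finite check.\<close>

definition quat_norm_sq :: "quat \<Rightarrow> real" where
  "quat_norm_sq p = (Re p)\<^sup>2 + (Im1 p)\<^sup>2 + (Im2 p)\<^sup>2 + (Im3 p)\<^sup>2"

lemma inverse_quat_mult: "quat_norm_sq p \<noteq> 0 \<Longrightarrow> inverse p * p = 1"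
  by (cases p) (simp add: quat_norm_sq_def inverse_quat_def times_quat_def one_quat_def Let_def
      add_divide_distrib[symmetric] diff_divide_distrib[symmetric] power2_eq_square algebra_simps)

lemma mult_inverse_quat: "quat_norm_sq p \<noteq> 0 \<Longrightarrow> p * inverse p = 1"
  by (cases p) (simp add: quat_norm_sq_def inverse_quat_def times_quat_def one_quat_def Let_def
      add_divide_distrib[symmetric] diff_divide_distrib[symmetric] power2_eq_square algebra_simps)

lemma power_int_neg_mult_quat:
  assumes "quat_norm_sq g \<noteq> 0" and "e \<in> {1, -1}"
  shows "g powi (- e) * g powi e = 1"
  using assms by (auto simp: power_int_def inverse_quat_mult mult_inverse_quat)

lemma minus_one_mult_quat: "(-1) * p = - (p :: quat)"
  by (cases p) (simp add: times_quat_def uminus_quat_def one_quat_def)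

lemma mult_minus_one_quat: "p * (-1) = - (p :: quat)"
  by (cases p) (simp add: times_quat_def uminus_quat_def one_quat_def)

lemma minus_minus_quat: "- (- p) = (p :: quat)"
  by (cases p) (simp add: uminus_quat_def)

lemma inverse_minus_one_quat: "inverse (-1 :: quat) = -1"
  by (simp add: inverse_quat_def one_quat_def uminus_quat_def Let_def)

lemma power_int_minus_one_quat: "e \<in> {1, -1} \<Longrightarrow> (-1 :: quat) powi e = -1"
  by (auto simp: power_int_def inverse_minus_one_quat)

text \<open>Elements of \<open>T*\<close> have coordinates in \<open>\<int>/2\<close>. Encoding them by their doubled integer
  coordinates turns finite facts about \<open>T*\<close> into closed computations, decided by \<open>code_simp\<close>.\<close>

type_synonym coords = "int \<times> int \<times> int \<times> int"

fun quat_of_coords :: "coords \<Rightarrow> quat" where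
  "quat_of_coords (a, b, c, d) = Quat (a / 2) (b / 2) (c / 2) (d / 2)"

fun coords_times :: "coords \<Rightarrow> coords \<Rightarrow> coords" where
  "coords_times (a, b, c, d) (a', b', c', d') =
     (a * a' - b * b' - c * c' - d * d', a * b' + b * a' + c * d' - d * c',
      a * c' - b * d' + c * a' + d * b', a * d' + b * c' - c * b' + d * a')"

fun coords_double :: "coords \<Rightarrow> coords" where
  "coords_double (a, b, c, d) = (2 * a, 2 * b, 2 * c, 2 * d)"

fun coords_halve :: "coords \<Rightarrow> coords" where
  "coords_halve (a, b, c, d) = (a div 2, b div 2, c div 2, d div 2)"

fun coords_power :: "coords \<Rightarrow> nat \<Rightarrow> coords" where
  "coords_power x 0 = (2, 0, 0, 0)"
| "coords_power x (Suc n) = coords_halve (coords_times x (coords_power x n))"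

definition Tstar_coords :: "coords list" where
  "Tstar_coords =
     [(2, 0, 0, 0), (-2, 0, 0, 0), (0, 2, 0, 0), (0, -2, 0, 0),
      (0, 0, 2, 0), (0, 0, -2, 0), (0, 0, 0, 2), (0, 0, 0, -2),
      (1, 1, 1, 1), (1, 1, 1, -1), (1, 1, -1, 1), (1, 1, -1, -1),
      (1, -1, 1, 1), (1, -1, 1, -1), (1, -1, -1, 1), (1, -1, -1, -1),
      (-1, 1, 1, 1), (-1, 1, 1, -1), (-1, 1, -1, 1), (-1, 1, -1, -1),
      (-1, -1, 1, 1), (-1, -1, 1, -1), (-1, -1, -1, 1), (-1, -1, -1, -1)]"

definition base_coords :: "coords list" where
  "base_coords =
     [(0, 2, 0, 0), (0, -2, 0, 0), (0, 0, 2, 0), (0, 0, -2, 0), (0, 0, 0, 2), (0, 0, 0, -2),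
      (1, 1, 1, 1), (1, 1, 1, -1), (1, 1, -1, 1), (1, 1, -1, -1),
      (1, -1, 1, 1), (1, -1, 1, -1), (1, -1, -1, 1), (1, -1, -1, -1)]"

lemma quat_of_coords_times:
  "quat_of_coords x * quat_of_coords y = quat_of_coords (coords_times x y) * Quat (1/2) 0 0 0"
  by (cases x; cases y) (simp add: times_quat_def field_simps)

lemma quat_of_coords_double: "quat_of_coords (coords_double z) * Quat (1/2) 0 0 0 = quat_of_coords z"
  by (cases z) (simp add: times_quat_def)

lemma mult_half_quat_cancel: "p * Quat (1/2) 0 0 0 = q * Quat (1/2) 0 0 0 \<longleftrightarrow> p = q"
  by (cases p; cases q) (simp add: times_quat_def)

lemma quat_of_coords_inject: "quat_of_coords x = quat_of_coords y \<longleftrightarrow> x = y"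
  by (cases x; cases y) simp

lemma quat_of_coords_times_double:
  "coords_times x y = coords_double z \<Longrightarrow> quat_of_coords x * quat_of_coords y = quat_of_coords z"
  by (simp add: quat_of_coords_times quat_of_coords_double)

lemma quat_of_coords_commute_iff:
  "quat_of_coords x * quat_of_coords y = quat_of_coords y * quat_of_coords x \<longleftrightarrow>
   coords_times x y = coords_times y x"
  by (simp add: quat_of_coords_times mult_half_quat_cancel quat_of_coords_inject)

lemma quat_of_coords_one: "quat_of_coords (2, 0, 0, 0) = 1"
  by (simp add: one_quat_def)

lemma Tstar_eq_coords: "Tstar = quat_of_coords ` set Tstar_coords"
proof -
  have "{Quat (a/2) (b/2) (c/2) (d/2) | a b c d.
          a \<in> {1,-1} \<and> b \<in> {1,-1} \<and> c \<in> {1,-1} \<and> d \<in> {1,-1}} =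
        {x. \<exists>a\<in>{1,-1::real}. \<exists>b\<in>{1,-1::real}. \<exists>c\<in>{1,-1::real}. \<exists>d\<in>{1,-1::real}.
          x = Quat (a/2) (b/2) (c/2) (d/2)}"
    by blast
  then show ?thesis
    unfolding Tstar_def Tstar_coords_def one_quat_def uminus_quat_def qi_def qj_def qk_def
    by (intro set_eqI) (simp; blast)
qed

lemma base_labels_eq_coords: "base_labels = quat_of_coords ` set base_coords"
proof -
  have "{Quat (1/2) (b/2) (c/2) (d/2) | b c d. b \<in> {1,-1} \<and> c \<in> {1,-1} \<and> d \<in> {1,-1}} =
        {x. \<exists>b\<in>{1,-1::real}. \<exists>c\<in>{1,-1::real}. \<exists>d\<in>{1,-1::real}.
          x = Quat (1/2) (b/2) (c/2) (d/2)}"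
    by blast
  then show ?thesis
    unfolding base_labels_def base_coords_def uminus_quat_def qi_def qj_def qk_def
    by (intro set_eqI) (simp; blast)
qed

lemma Tstar_coords_times_closed:
  "\<forall>x\<in>set Tstar_coords. \<forall>y\<in>set Tstar_coords. \<exists>z\<in>set Tstar_coords.
     coords_times x y = coords_double z"
  unfolding Tstar_coords_def by code_simp

lemma Tstar_coords_left_inverse:
  "\<forall>x\<in>set Tstar_coords. \<exists>y\<in>set Tstar_coords. coords_times y x = coords_double (2, 0, 0, 0)"
  unfolding Tstar_coords_def by code_simp

lemma base_coords_subset: "set base_coords \<subseteq> set Tstar_coords"
  unfolding Tstar_coords_def base_coords_def by code_simp

lemma base_coords_centralizer:
  "\<forall>x\<in>set base_coords. \<forall>y\<in>set Tstar_coords.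
     coords_times x y = coords_times y x \<longrightarrow> (\<exists>n\<in>set [0..<6]. y = coords_power x n)"
  unfolding Tstar_coords_def base_coords_def by code_simp

lemma one_in_Tstar: "1 \<in> Tstar"
  unfolding Tstar_eq_coords quat_of_coords_one[symmetric] by (simp add: Tstar_coords_def)

lemma Tstar_mult_closed: "g \<in> Tstar \<Longrightarrow> h \<in> Tstar \<Longrightarrow> g * h \<in> Tstar"
  unfolding Tstar_eq_coords using Tstar_coords_times_closed quat_of_coords_times_double by blast

lemma power_in_Tstar: "g \<in> Tstar \<Longrightarrow> g ^ n \<in> Tstar"
  by (induction n) (simp_all add: one_in_Tstar Tstar_mult_closed)

lemma quat_norm_sq_Tstar: "g \<in> Tstar \<Longrightarrow> quat_norm_sq g = 1"
  by (auto simp: Tstar_def quat_norm_sq_def one_quat_def uminus_quat_def qi_def qj_def qk_def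
      power2_eq_square)

lemma inverse_in_Tstar:
  assumes "g \<in> Tstar"
  shows "inverse g \<in> Tstar"
proof -
  obtain h where "h \<in> Tstar" and left_inverse: "h * g = 1"
    using assms Tstar_coords_left_inverse quat_of_coords_times_double quat_of_coords_one
    unfolding Tstar_eq_coords by (metis imageE image_eqI)
  have "inverse g = (h * g) * inverse g"
    by (simp add: left_inverse)
  also have "\<dots> = h"
    by (simp add: mult.assoc mult_inverse_quat quat_norm_sq_Tstar assms)
  finally show ?thesis
    using \<open>h \<in> Tstar\<close> by simp
qed

lemma power_int_in_Tstar: "g \<in> Tstar \<Longrightarrow> g powi n \<in> Tstar"
  by (simp add: power_int_def power_in_Tstar inverse_in_Tstar)

lemma coords_power_Tstar_coords:
  assumes "x \<in> set Tstar_coords"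
  shows "coords_power x n \<in> set Tstar_coords \<and>
         quat_of_coords (coords_power x n) = quat_of_coords x ^ n"
proof (induction n)
  case 0
  then show ?case
    by (simp add: quat_of_coords_one del: quat_of_coords.simps) (simp add: Tstar_coords_def)
next
  case (Suc n)
  then obtain z where "z \<in> set Tstar_coords"
    and z: "coords_times x (coords_power x n) = coords_double z"
    using assms Tstar_coords_times_closed by blast
  moreover have "coords_halve (coords_double z) = z"
    by (cases z) simp
  ultimately show ?case
    using Suc quat_of_coords_times_double[OF z] by simp
qed

lemma Tstar_centralizer_base_label:
  assumes "x \<in> base_labels" and "q \<in> Tstar" and "x * q = q * x"
  shows "\<exists>n::int. q = x powi n"
proof -
  obtain u where u: "u \<in> set base_coords" "x = quat_of_coords u"
    using assms(1) unfolding base_labels_eq_coords by blast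
  obtain v where v: "v \<in> set Tstar_coords" "q = quat_of_coords v"
    using assms(2) unfolding Tstar_eq_coords by blast
  have "coords_times u v = coords_times v u"
    using assms(3) u(2) v(2) quat_of_coords_commute_iff by simp
  then obtain n where "v = coords_power u n"
    using base_coords_centralizer u(1) v(1) by blast
  then have "q = x ^ n"
    using coords_power_Tstar_coords[of u n] base_coords_subset u v by blast
  then have "q = x powi int n"
    by simp
  then show ?thesis ..
qed

definition crossing_factor :: "('c \<Rightarrow> 'a) \<Rightarrow> ('c \<Rightarrow> int) \<Rightarrow> ('a \<Rightarrow> quat) \<Rightarrow> 'c \<Rightarrow> quat" where
  "crossing_factor ov sg chi c = (if chi (ov c) = -1 then 1 else chi (ov c) powi sg c)"

lemma qprod_Cons_crossing_factor:
  "qprod ov sg chi (c # cs) = qprod ov sg chi cs * crossing_factor ov sg chi c"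
  by (simp add: crossing_factor_def)

declare qprod.simps(2) [simp del]

lemma crossing_data:
  assumes "diagram A C ov ui uo sg" and "Tstar_coloring A C ov ui uo sg chi" and "c \<in> C"
  shows "chi (ov c) \<in> Tstar" and "sg c \<in> {1, -1}"
    and "chi (uo c) = chi (ov c) powi sg c * chi (ui c) * chi (ov c) powi (- sg c)"
  using assms unfolding diagram_def Tstar_coloring_def by blast+

lemma crossing_factor_in_Tstar:
  assumes "diagram A C ov ui uo sg" and "Tstar_coloring A C ov ui uo sg chi" and "c \<in> C"
  shows "crossing_factor ov sg chi c \<in> Tstar"
  using crossing_data[OF assms] by (simp add: crossing_factor_def one_in_Tstar power_int_in_Tstar)

lemma crossing_factor_intertwines:
  assumes "diagram A C ov ui uo sg" and "Tstar_coloring A C ov ui uo sg chi" and "c \<in> C"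
  shows "chi (uo c) * crossing_factor ov sg chi c = crossing_factor ov sg chi c * chi (ui c)"
proof (cases "chi (ov c) = -1")
  case True
  have "sg c \<in> {1, -1}" and "- sg c \<in> {1, -1}"
    using crossing_data(2)[OF assms] by auto
  with True crossing_data(3)[OF assms] have "chi (uo c) = (-1) * chi (ui c) * (-1)"
    by (simp add: power_int_minus_one_quat)
  then have "chi (uo c) = chi (ui c)"
    by (simp add: minus_one_mult_quat mult_minus_one_quat minus_minus_quat)
  with True show ?thesis
    by (simp add: crossing_factor_def)
next
  case False
  define g where "g = chi (ov c) powi sg c"
  have "chi (ov c) powi (- sg c) * g = 1"
    using crossing_data(1,2)[OF assms] power_int_neg_mult_quat quat_norm_sq_Tstar g_def by simp
  then have "chi (uo c) * g = g * chi (ui c)"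
    using crossing_data(3)[OF assms] by (simp add: g_def mult.assoc)
  with False show ?thesis
    by (simp add: crossing_factor_def g_def)
qed

lemma qprod_in_Tstar:
  assumes "diagram A C ov ui uo sg" and "Tstar_coloring A C ov ui uo sg chi" and "set cs \<subseteq> C"
  shows "qprod ov sg chi cs \<in> Tstar"
  using assms(3)
proof (induction cs)
  case Nil
  then show ?case by (simp add: one_in_Tstar)
next
  case (Cons c cs)
  then show ?case
    by (simp add: qprod_Cons_crossing_factor Tstar_mult_closed crossing_factor_in_Tstar[OF assms(1,2)])
qed

lemma qprod_intertwines:
  assumes "diagram A C ov ui uo sg" and "Tstar_coloring A C ov ui uo sg chi"
    and "set cs \<subseteq> C" and "cs \<noteq> []"
    and "\<forall>t. Suc t < length cs \<longrightarrow> ui (cs ! Suc t) = uo (cs ! t)"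
  shows "chi (uo (last cs)) * qprod ov sg chi cs = qprod ov sg chi cs * chi (ui (hd cs))"
  using assms(4,3,5)
proof (induction cs rule: list_nonempty_induct)
  case (single c)
  then show ?case
    using crossing_factor_intertwines[OF assms(1,2)] by (simp add: qprod_Cons_crossing_factor)
next
  case (cons c cs)
  let ?q = "qprod ov sg chi cs" and ?h = "crossing_factor ov sg chi c"
  have linked: "\<forall>t. Suc t < length cs \<longrightarrow> ui (cs ! Suc t) = uo (cs ! t)"
    using cons.prems(2) by auto
  have "ui (hd cs) = uo c"
    using cons.prems(2) cons.hyps by (auto simp: hd_conv_nth)
  then have IH: "chi (uo (last cs)) * ?q = ?q * chi (uo c)"
    using cons.IH cons.prems(1) linked by simp
  have "chi (uo (last (c # cs))) * qprod ov sg chi (c # cs) = chi (uo (last cs)) * ?q * ?h"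
    using cons.hyps by (simp add: qprod_Cons_crossing_factor mult.assoc)
  also have "\<dots> = ?q * (chi (uo c) * ?h)"
    by (simp add: IH mult.assoc)
  also have "\<dots> = ?q * ?h * chi (ui c)"
    using crossing_factor_intertwines[OF assms(1,2)] cons.prems(1) by (simp add: mult.assoc)
  finally show ?case
    by (simp add: qprod_Cons_crossing_factor)
qed

theorem mainTheorem2:
  fixes A :: "'a set" and C :: "'c set"
    and ov ui uo :: "'c \<Rightarrow> 'a" and sg :: "'c \<Rightarrow> int" and chi :: "'a \<Rightarrow> quat"
    and a0 :: 'a and cs :: "'c list"
  assumes "diagram A C ov ui uo sg"
    and "Tstar_coloring A C ov ui uo sg chi"
    and "a0 \<in> A"
    and "component_traversal C ui uo a0 cs"
    and "chi a0 \<in> base_labels"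
  shows "\<exists>n::int. qprod ov sg chi cs = chi a0 powi n"
proof (cases "cs = []")
  case True
  then have "qprod ov sg chi cs = chi a0 powi 0" by simp
  then show ?thesis ..
next
  case False
  with assms(4) have traversal: "set cs \<subseteq> C" "ui (hd cs) = a0" "uo (last cs) = a0"
    "\<forall>t. Suc t < length cs \<longrightarrow> ui (cs ! Suc t) = uo (cs ! t)"
    by (simp_all add: component_traversal_def)
  have "chi a0 * qprod ov sg chi cs = qprod ov sg chi cs * chi a0"
    using qprod_intertwines[OF assms(1,2) traversal(1) False traversal(4)] traversal(2,3) by simp
  moreover have "qprod ov sg chi cs \<in> Tstar"
    using qprod_in_Tstar[OF assms(1,2) traversal(1)] .
  ultimately show ?thesis
    using Tstar_centralizer_base_label[OF assms(5)] by blast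
qed

end
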